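(* Let $T=\mathrm{diag}(t_1,t_2,t_3)$ be a real diagonal matrix with $t_1t_2t_3\neq0$, and define $N_T>0$ by $N_T^{-1}=\int_{S^2}(\boldsymbol n^\intercal T^{-2}\boldsymbol n)^{-2}\,\mathrm{d}^2\boldsymbol n$. Then \[ N_T\,|\det T|\int_{S^2}\sqrt{\boldsymbol n^\intercal T^{2}\boldsymbol n}\;\mathrm{d}^2\boldsymbol n = 1 . \] Consequently, $2\pi N_T|\det T|=1$ holds if and only if $\int_{S^2}\sqrt{\boldsymbol n^\intercal T^{2}\boldsymbol n}\,\mathrm{d}^2\boldsymbol n=2\pi$.
   Context: $S^2$ is the unit sphere in $\mathbb{R}^3$ with its standard surface measure $\mathrm{d}^2\boldsymbol n$. *)

theory Defs
  imports "HOL-Analysis.Analysis"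
begin

definition sphere_pt :: "real \<Rightarrow> real \<Rightarrow> real^3" where
  "sphere_pt th ph = vector [sin th * cos ph, sin th * sin ph, cos th]"

definition sphere_integral :: "(real^3 \<Rightarrow> real) \<Rightarrow> real" where
  "sphere_integral f =
     (LINT p : {0..pi} \<times> {0..2*pi} | lborel.
        f (sphere_pt (fst p) (snd p)) * sin (fst p))"

definition diag3 :: "real^3 \<Rightarrow> real^3^3" where
  "diag3 t = (\<chi> i j. if i = j then t $ i else 0)"

end

theory Submission
  imports Defs
begin

text \<open>Substitute n = T m / |T m|, a diffeomorphism of S^2 with Jacobian |det T| / |T m|^3. Then
  n^T T^(-2) n = 1 / |T m|^2, so the first integrand becomes |det T| |T m| = |det T| sqrt (m^T T^2 m).
  In spherical coordinates the substitution splits into two one-dimensional ones: the azimuth moves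
  by the angle map of the ellipse x \<mapsto> (a cos x, b sin x), whose derivative is
  a b / (a^2 cos^2 x + b^2 sin^2 x), and then the polar angle by the angle map of the ellipse with
  semi-axes c and r(\<phi>) = |(a cos \<phi>, b sin \<phi>)|.\<close>

text \<open>For a, b > 0, circle_angle a b x is the continuous polar angle of (a cos x, b sin x); the
  arctan term is the angle from (cos x, sin x) to that point.\<close>
definition circle_angle :: "real \<Rightarrow> real \<Rightarrow> real \<Rightarrow> real" where
  "circle_angle a b x = x + arctan ((b - a) * sin x * cos x / (a * (cos x)\<^sup>2 + b * (sin x)\<^sup>2))"

definition ellipse_radius :: "real \<Rightarrow> real \<Rightarrow> real \<Rightarrow> real" where
  "ellipse_radius a b x = sqrt ((a * cos x)\<^sup>2 + (b * sin x)\<^sup>2)"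

lemma cos_sin_combination_pos:
  fixes x :: real
  assumes "0 < a" "0 < b"
  shows "0 < a * (cos x)\<^sup>2 + b * (sin x)\<^sup>2"
proof -
  have "(cos x)\<^sup>2 + (sin x)\<^sup>2 = 1" by (rule sin_cos_squared_add2)
  hence "(cos x)\<^sup>2 > 0 \<or> (sin x)\<^sup>2 > 0" by (smt (verit) zero_le_power2)
  thus ?thesis using assms by (smt (verit) mult_pos_pos mult_nonneg_nonneg zero_le_power2)
qed

lemma ellipse_radius_sq: "(ellipse_radius a b x)\<^sup>2 = (a * cos x)\<^sup>2 + (b * sin x)\<^sup>2"
  unfolding ellipse_radius_def by simp

lemma ellipse_radius_pos:
  assumes "0 < a" "0 < b"
  shows "0 < ellipse_radius a b x"
  using cos_sin_combination_pos[of "a\<^sup>2" "b\<^sup>2" x] assms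
  unfolding ellipse_radius_def by (simp add: power_mult_distrib)

lemma one_plus_circle_angle_arctan_arg_sq:
  assumes "0 < a" "0 < b"
  shows "1 + ((b - a) * sin x * cos x / (a * (cos x)\<^sup>2 + b * (sin x)\<^sup>2))\<^sup>2
    = (ellipse_radius a b x)\<^sup>2 / (a * (cos x)\<^sup>2 + b * (sin x)\<^sup>2)\<^sup>2"
proof -
  have "(a * (cos x)\<^sup>2 + b * (sin x)\<^sup>2)\<^sup>2 + ((b - a) * sin x * cos x)\<^sup>2 = (ellipse_radius a b x)\<^sup>2"
    unfolding ellipse_radius_sq using sin_cos_squared_add2[of x] by algebra
  with cos_sin_combination_pos[OF assms, of x] show ?thesis
    by (simp add: field_simps)
qed

lemma has_real_derivative_circle_angle:
  assumes "0 < a" "0 < b"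
  shows "(circle_angle a b has_real_derivative a * b / (ellipse_radius a b x)\<^sup>2) (at x)"
proof -
  define c s where "c = cos x" and "s = sin x"
  define D where "D = a * c\<^sup>2 + b * s\<^sup>2"
  define E where "E = (ellipse_radius a b x)\<^sup>2"
  define M where "M = (b - a) * (c * c - s * s) * D - (b - a) * s * c * (2 * (b - a) * s * c)"
  have D: "D \<noteq> 0" using cos_sin_combination_pos[OF assms, of x] unfolding D_def c_def s_def by simp
  have E: "E \<noteq> 0" using ellipse_radius_pos[OF assms, of x] unfolding E_def by simp
  have "((\<lambda>x. (b - a) * sin x * cos x / (a * (cos x)\<^sup>2 + b * (sin x)\<^sup>2)) has_real_derivative M / D\<^sup>2) (at x)"
    unfolding M_def c_def s_def D_def
    by (rule derivative_eq_intros refl)+ (use D in \<open>simp_all add: c_def s_def D_def power2_eq_square field_simps\<close>)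
  hence "(circle_angle a b has_real_derivative 1 + inverse (E / D\<^sup>2) * (M / D\<^sup>2)) (at x)"
    unfolding circle_angle_def E_def D_def c_def s_def one_plus_circle_angle_arctan_arg_sq[OF assms, symmetric]
    by (intro DERIV_add DERIV_ident DERIV_arctan[THEN DERIV_chain2])
  moreover have "E + M = a * b"
    using sin_cos_squared_add2[of x] unfolding E_def M_def ellipse_radius_sq D_def c_def s_def by algebra
  ultimately show ?thesis using D E unfolding E_def[symmetric] by (simp add: field_simps)
qed

lemma borel_measurable_circle_angle [measurable]: "circle_angle a b \<in> borel_measurable borel"
  unfolding circle_angle_def by measurable

lemma borel_measurable_ellipse_radius [measurable]: "ellipse_radius a b \<in> borel_measurable borel"
  unfolding ellipse_radius_def by measurable

lemma cos_sin_circle_angle: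
  assumes "0 < a" "0 < b"
  shows "cos (circle_angle a b x) = a * cos x / ellipse_radius a b x"
    and "sin (circle_angle a b x) = b * sin x / ellipse_radius a b x"
proof -
  define c s where "c = cos x" and "s = sin x"
  define D where "D = a * c\<^sup>2 + b * s\<^sup>2"
  define R where "R = ellipse_radius a b x"
  define z where "z = (b - a) * s * c / D"
  have cs: "c\<^sup>2 + s\<^sup>2 = 1" unfolding c_def s_def by simp
  have D: "0 < D" unfolding D_def c_def s_def using cos_sin_combination_pos[OF assms] .
  have R: "0 < R" unfolding R_def using ellipse_radius_pos[OF assms] .
  have sqrt_z: "sqrt (1 + z\<^sup>2) = R / D"
    using one_plus_circle_angle_arctan_arg_sq[OF assms, of x] D R
    unfolding z_def D_def R_def c_def s_def by (simp add: real_sqrt_divide)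
  have angle: "circle_angle a b x = x + arctan z"
    unfolding circle_angle_def z_def D_def c_def s_def by simp
  have "cos (circle_angle a b x) = (c * D - s * (b - a) * s * c) / R"
    unfolding angle cos_add cos_arctan sin_arctan sqrt_z c_def[symmetric] s_def[symmetric]
    using D R by (simp add: z_def field_simps)
  also have "c * D - s * (b - a) * s * c = a * c"
    unfolding D_def using cs by algebra
  finally show "cos (circle_angle a b x) = a * cos x / ellipse_radius a b x"
    unfolding R_def c_def .
  have "sin (circle_angle a b x) = (s * D + c * (b - a) * s * c) / R"
    unfolding angle sin_add cos_arctan sin_arctan sqrt_z c_def[symmetric] s_def[symmetric]
    using D R by (simp add: z_def field_simps)
  also have "s * D + c * (b - a) * s * c = b * s"
    unfolding D_def using cs by algebra
  finally show "sin (circle_angle a b x) = b * sin x / ellipse_radius a b x"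
    unfolding R_def s_def .
qed

lemma nn_integral_circle_angle_substitution:
  fixes f :: "real \<Rightarrow> ennreal"
  assumes "0 < a" "0 < b" "f \<in> borel_measurable borel" "0 < k"
  shows "(\<integral>\<^sup>+x\<in>{0..real k * pi}. f x \<partial>lborel)
    = (\<integral>\<^sup>+x\<in>{0..real k * pi}. f (circle_angle a b x) * ennreal (a * b / (ellipse_radius a b x)\<^sup>2) \<partial>lborel)"
proof -
  have "circle_angle a b 0 = 0" "circle_angle a b (real k * pi) = real k * pi"
    by (simp_all add: circle_angle_def)
  moreover have "(\<integral>\<^sup>+x. f x * indicator {circle_angle a b 0..circle_angle a b (real k * pi)} x \<partial>lborel)
    = (\<integral>\<^sup>+x\<in>{0..real k * pi}. f (circle_angle a b x) * ennreal (a * b / (ellipse_radius a b x)\<^sup>2) \<partial>lborel)"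
  proof (rule nn_integral_substitution_aux[OF assms(3)])
    have "(a * cos x)\<^sup>2 + (b * sin x)\<^sup>2 \<noteq> 0" for x
      using ellipse_radius_pos[OF assms(1,2), of x] unfolding ellipse_radius_sq[symmetric] by simp
    thus "continuous_on {0..real k * pi} (\<lambda>x. a * b / (ellipse_radius a b x)\<^sup>2)"
      unfolding ellipse_radius_sq by (intro continuous_intros) auto
    show "\<And>x. 0 \<le> a * b / (ellipse_radius a b x)\<^sup>2"
      using assms(1,2) by simp
  qed (use assms has_real_derivative_circle_angle in auto)
  ultimately show ?thesis by simp
qed

lemma nn_integral_lborel_Times:
  fixes h :: "real \<times> real \<Rightarrow> ennreal"
  assumes [measurable]: "h \<in> borel_measurable borel" "A \<in> sets borel" "C \<in> sets borel"
  shows "(\<integral>\<^sup>+p\<in>A \<times> C. h p \<partial>lborel) = (\<integral>\<^sup>+y\<in>C. (\<integral>\<^sup>+x\<in>A. h (x, y) \<partial>lborel) \<partial>lborel)"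
proof -
  have "A \<times> C \<in> sets (borel :: (real \<times> real) measure)"
    by (metis assms(2,3) borel_prod pair_measureI)
  hence "(\<lambda>p. h p * indicator (A \<times> C) p) \<in> borel_measurable (lborel \<Otimes>\<^sub>M lborel)"
    unfolding lborel_prod measurable_lborel1 by measurable
  hence "(\<integral>\<^sup>+p\<in>A \<times> C. h p \<partial>lborel)
      = (\<integral>\<^sup>+y. \<integral>\<^sup>+x. h (x, y) * indicator (A \<times> C) (x, y) \<partial>lborel \<partial>lborel)"
    unfolding lborel_prod[symmetric] by (rule lborel_pair.nn_integral_snd[symmetric])
  also have "\<dots> = (\<integral>\<^sup>+y\<in>C. (\<integral>\<^sup>+x\<in>A. h (x, y) \<partial>lborel) \<partial>lborel)"
  proof (rule nn_integral_cong)
    fix y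
    have "(\<integral>\<^sup>+x. h (x, y) * indicator (A \<times> C) (x, y) \<partial>lborel)
        = (\<integral>\<^sup>+x. h (x, y) * indicator A x * indicator C y \<partial>lborel)"
      by (simp add: indicator_times mult.assoc)
    also have "\<dots> = (\<integral>\<^sup>+x\<in>A. h (x, y) \<partial>lborel) * indicator C y"
      by (rule nn_integral_multc) measurable
    finally show "(\<integral>\<^sup>+x. h (x, y) * indicator (A \<times> C) (x, y) \<partial>lborel)
        = (\<integral>\<^sup>+x\<in>A. h (x, y) \<partial>lborel) * indicator C y" .
  qed
  finally show ?thesis .
qed

definition diag_norm_sq :: "real \<Rightarrow> real \<Rightarrow> real \<Rightarrow> real \<Rightarrow> real \<Rightarrow> real" where
  "diag_norm_sq a b c th ph = (a * sin th * cos ph)\<^sup>2 + (b * sin th * sin ph)\<^sup>2 + (c * cos th)\<^sup>2"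

lemma diag_norm_sq_eq_ellipse_radius:
  "diag_norm_sq a b c th ph = (ellipse_radius c (ellipse_radius a b ph) th)\<^sup>2"
  by (simp add: diag_norm_sq_def ellipse_radius_sq power_mult_distrib algebra_simps)

lemma diag_norm_sq_pos:
  assumes "0 < a" "0 < b" "0 < c"
  shows "0 < diag_norm_sq a b c th ph"
  unfolding diag_norm_sq_eq_ellipse_radius
  using ellipse_radius_pos[OF assms(3) ellipse_radius_pos[OF assms(1,2), of ph], of th] by simp

lemma diag_norm_sq_inverse_circle_angle:
  assumes a: "0 < a" and b: "0 < b" and c: "0 < c" and r: "r = ellipse_radius a b ph"
  shows "diag_norm_sq (1/a) (1/b) (1/c) (circle_angle c r th) (circle_angle a b ph)
    = 1 / diag_norm_sq a b c th ph"
proof -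
  have r_pos: "0 < r" unfolding r using ellipse_radius_pos[OF a b] .
  define L where "L = ellipse_radius c r th"
  have L: "0 < L" unfolding L_def using ellipse_radius_pos[OF c r_pos] .
  have "diag_norm_sq (1/a) (1/b) (1/c) (circle_angle c r th) (circle_angle a b ph)
      = ((sin th * cos ph)\<^sup>2 + (sin th * sin ph)\<^sup>2 + (cos th)\<^sup>2) / L\<^sup>2"
    unfolding diag_norm_sq_def cos_sin_circle_angle[OF a b] cos_sin_circle_angle[OF c r_pos]
      r[symmetric] L_def[symmetric]
    using a b c r_pos L by (simp add: field_simps power2_eq_square)
  also have "(sin th * cos ph)\<^sup>2 + (sin th * sin ph)\<^sup>2 + (cos th)\<^sup>2 = 1"
    using sin_cos_squared_add[of th] sin_cos_squared_add[of ph] by algebra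
  also have "L\<^sup>2 = diag_norm_sq a b c th ph"
    unfolding diag_norm_sq_eq_ellipse_radius r[symmetric] L_def ..
  finally show ?thesis .
qed

text \<open>The two factors after the first one are the derivatives of the polar and the azimuthal
  substitution.\<close>
lemma circle_angle_jacobian_identity:
  assumes a: "0 < a" and b: "0 < b" and c: "0 < c" and r: "r = ellipse_radius a b ph"
  shows "sin (circle_angle c r th)
        / (diag_norm_sq (1/a) (1/b) (1/c) (circle_angle c r th) (circle_angle a b ph))\<^sup>2
      * (c * r / (ellipse_radius c r th)\<^sup>2) * (a * b / r\<^sup>2)
    = a * b * c * (sin th * sqrt (diag_norm_sq a b c th ph))"
proof -
  have r_pos: "0 < r" unfolding r using ellipse_radius_pos[OF a b] .
  define L where "L = ellipse_radius c r th"
  have L: "0 < L" unfolding L_def using ellipse_radius_pos[OF c r_pos] .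
  have N: "diag_norm_sq a b c th ph = L\<^sup>2"
    unfolding diag_norm_sq_eq_ellipse_radius r[symmetric] L_def ..
  have denominator: "diag_norm_sq (1/a) (1/b) (1/c) (circle_angle c r th) (circle_angle a b ph) = 1 / L\<^sup>2"
    unfolding diag_norm_sq_inverse_circle_angle[OF a b c r] N ..
  have numerator: "sin (circle_angle c r th) = r * sin th / L"
    unfolding cos_sin_circle_angle[OF c r_pos] L_def ..
  have sqrt_N: "sqrt (diag_norm_sq a b c th ph) = L"
    using N L by simp
  show ?thesis
    unfolding denominator numerator sqrt_N L_def[symmetric] using r_pos L
    by (simp add: field_simps power2_eq_square)
qed

lemma nn_integral_diag_norm_sq_duality:
  assumes a: "0 < a" and b: "0 < b" and c: "0 < c"
  shows "(\<integral>\<^sup>+p\<in>{0..pi} \<times> {0..2*pi}.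
            ennreal (sin (fst p) / (diag_norm_sq (1/a) (1/b) (1/c) (fst p) (snd p))\<^sup>2) \<partial>lborel)
    = ennreal (a * b * c) * (\<integral>\<^sup>+p\<in>{0..pi} \<times> {0..2*pi}.
            ennreal (sin (fst p) * sqrt (diag_norm_sq a b c (fst p) (snd p))) \<partial>lborel)"
proof -
  define F where "F th ph = ennreal (sin th / (diag_norm_sq (1/a) (1/b) (1/c) th ph)\<^sup>2)" for th ph
  define G where "G th ph = ennreal (a * b * c * (sin th * sqrt (diag_norm_sq a b c th ph)))" for th ph
  have F_measurable: "(\<lambda>p. F (fst p) (snd p)) \<in> borel_measurable borel"
    and G_measurable: "(\<lambda>p. G (fst p) (snd p)) \<in> borel_measurable borel"
    unfolding F_def G_def diag_norm_sq_def borel_prod[symmetric] by measurable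
  have inner: "(\<integral>\<^sup>+th\<in>{0..pi}. F th (circle_angle a b ph) \<partial>lborel) * ennreal (a * b / (ellipse_radius a b ph)\<^sup>2)
      = (\<integral>\<^sup>+th\<in>{0..pi}. G th ph \<partial>lborel)" for ph
  proof -
    define r where "r = ellipse_radius a b ph"
    have r: "0 < r" unfolding r_def using ellipse_radius_pos[OF a b] .
    have "(\<integral>\<^sup>+th\<in>{0..real 1 * pi}. F th (circle_angle a b ph) \<partial>lborel)
        = (\<integral>\<^sup>+th\<in>{0..real 1 * pi}.
            F (circle_angle c r th) (circle_angle a b ph) * ennreal (c * r / (ellipse_radius c r th)\<^sup>2) \<partial>lborel)"
      by (rule nn_integral_circle_angle_substitution[OF c r _ zero_less_one]) (unfold F_def diag_norm_sq_def, measurable)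
    hence "(\<integral>\<^sup>+th\<in>{0..pi}. F th (circle_angle a b ph) \<partial>lborel) * ennreal (a * b / r\<^sup>2)
        = (\<integral>\<^sup>+th. F (circle_angle c r th) (circle_angle a b ph) * ennreal (c * r / (ellipse_radius c r th)\<^sup>2)
            * indicator {0..pi} th * ennreal (a * b / r\<^sup>2) \<partial>lborel)"
      by (simp only: of_nat_1 mult_1) (rule nn_integral_multc[symmetric], unfold F_def diag_norm_sq_def, measurable)
    also have "\<dots> = (\<integral>\<^sup>+th\<in>{0..pi}. G th ph \<partial>lborel)"
    proof (rule nn_integral_cong)
      fix th
      have "0 \<le> c * r / (ellipse_radius c r th)\<^sup>2" "0 \<le> a * b / r\<^sup>2"
        using a b c r by simp_all
      hence "F (circle_angle c r th) (circle_angle a b ph)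
          * ennreal (c * r / (ellipse_radius c r th)\<^sup>2) * ennreal (a * b / r\<^sup>2) = G th ph"
        unfolding F_def G_def circle_angle_jacobian_identity[OF a b c r_def, symmetric]
        by (simp only: ennreal_mult'')
      thus "F (circle_angle c r th) (circle_angle a b ph) * ennreal (c * r / (ellipse_radius c r th)\<^sup>2)
            * indicator {0..pi} th * ennreal (a * b / r\<^sup>2) = G th ph * indicator {0..pi} th"
        by (simp only: ac_simps)
    qed
    finally show ?thesis unfolding r_def .
  qed
  have "(\<integral>\<^sup>+p\<in>{0..pi} \<times> {0..2*pi}. F (fst p) (snd p) \<partial>lborel)
      = (\<integral>\<^sup>+ph\<in>{0..real 2 * pi}. (\<integral>\<^sup>+th\<in>{0..pi}. F th ph \<partial>lborel) \<partial>lborel)"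
    using nn_integral_lborel_Times[OF F_measurable] by simp
  also have "\<dots> = (\<integral>\<^sup>+ph\<in>{0..real 2 * pi}. (\<integral>\<^sup>+th\<in>{0..pi}. F th (circle_angle a b ph) \<partial>lborel)
      * ennreal (a * b / (ellipse_radius a b ph)\<^sup>2) \<partial>lborel)"
    by (rule nn_integral_circle_angle_substitution[OF a b _ zero_less_numeral])
      (unfold F_def diag_norm_sq_def, measurable)
  also have "\<dots> = (\<integral>\<^sup>+ph\<in>{0..2 * pi}. (\<integral>\<^sup>+th\<in>{0..pi}. G th ph \<partial>lborel) \<partial>lborel)"
    by (simp add: inner)
  also have "\<dots> = (\<integral>\<^sup>+p\<in>{0..pi} \<times> {0..2*pi}. G (fst p) (snd p) \<partial>lborel)"
    using nn_integral_lborel_Times[OF G_measurable] by simp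
  also have "\<dots> = ennreal (a * b * c) * (\<integral>\<^sup>+p\<in>{0..pi} \<times> {0..2*pi}.
      ennreal (sin (fst p) * sqrt (diag_norm_sq a b c (fst p) (snd p))) \<partial>lborel)"
  proof -
    have "G th ph = ennreal (a * b * c) * ennreal (sin th * sqrt (diag_norm_sq a b c th ph))" for th ph
      unfolding G_def using a b c by (simp add: ennreal_mult')
    hence "(\<integral>\<^sup>+p\<in>{0..pi} \<times> {0..2*pi}. G (fst p) (snd p) \<partial>lborel)
        = (\<integral>\<^sup>+p. ennreal (a * b * c) * (ennreal (sin (fst p) * sqrt (diag_norm_sq a b c (fst p) (snd p)))
            * indicator ({0..pi} \<times> {0..2*pi}) p) \<partial>lborel)"
      by (simp add: mult.assoc)
    also have "\<dots> = ennreal (a * b * c) * (\<integral>\<^sup>+p\<in>{0..pi} \<times> {0..2*pi}.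
        ennreal (sin (fst p) * sqrt (diag_norm_sq a b c (fst p) (snd p))) \<partial>lborel)"
      by (rule nn_integral_cmult) (unfold lborel_prod[symmetric] diag_norm_sq_def, measurable)
    finally show ?thesis .
  qed
  finally show ?thesis unfolding F_def .
qed

lemma nn_integral_sin_sqrt_diag_norm_sq_pos:
  assumes "0 < a" "0 < b" "0 < c"
  shows "(\<integral>\<^sup>+p\<in>{0..pi} \<times> {0..2*pi}. ennreal (sin (fst p) * sqrt (diag_norm_sq a b c (fst p) (snd p))) \<partial>lborel) \<noteq> 0"
proof -
  define G where "G p = ennreal (sin (fst p) * sqrt (diag_norm_sq a b c (fst p) (snd p)))" for p
  define U where "U = {0<..<pi} \<times> {0<..<2*pi :: real}"
  have "U \<notin> null_sets lborel"
  proof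
    assume "U \<in> null_sets lborel"
    hence "emeasure lborel U = 0" by (rule null_setsD1)
    moreover have "emeasure lborel U = emeasure lborel {0<..<pi} * emeasure lborel {0<..<2*pi :: real}"
      unfolding U_def lborel_prod[symmetric] by (rule lborel.emeasure_pair_measure_Times) simp_all
    ultimately show False
      by (simp add: ennreal_mult''[symmetric])
  qed
  moreover have "AE p\<in>U in lborel. 0 < G p"
  proof (rule AE_I2, rule impI)
    fix p assume "p \<in> U"
    hence "0 < sin (fst p)" unfolding U_def by (auto intro: sin_gt_zero)
    with diag_norm_sq_pos[OF assms] show "0 < G p" unfolding G_def by simp
  qed
  moreover have "G \<in> borel_measurable lborel" "U \<in> sets lborel"
    unfolding G_def U_def diag_norm_sq_def lborel_prod[symmetric] by measurable
  ultimately have "(\<integral>\<^sup>+p\<in>U. G p \<partial>lborel) \<noteq> 0"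
    using null_if_pos_func_has_zero_nn_int by blast
  moreover have "(\<integral>\<^sup>+p\<in>U. G p \<partial>lborel) \<le> (\<integral>\<^sup>+p\<in>{0..pi} \<times> {0..2*pi}. G p \<partial>lborel)"
    unfolding U_def by (rule nn_set_integral_set_mono) auto
  ultimately show ?thesis
    unfolding G_def by auto
qed

lemma set_nn_integral_eq_set_integral_continuous:
  fixes f :: "'a::euclidean_space \<Rightarrow> real"
  assumes S: "compact S" and f: "continuous_on S f" and nonneg: "\<And>x. x \<in> S \<Longrightarrow> 0 \<le> f x"
  shows "(\<integral>\<^sup>+x\<in>S. ennreal (f x) \<partial>lborel) = ennreal (LINT x:S|lborel. f x)"
    and "0 \<le> (LINT x:S|lborel. f x)"
proof -
  have integrable: "integrable lborel (\<lambda>x. indicator S x *\<^sub>R f x)"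
    by (rule borel_integrable_compact[OF S f])
  have "(\<integral>\<^sup>+x\<in>S. ennreal (f x) \<partial>lborel) = (\<integral>\<^sup>+x. ennreal (indicator S x *\<^sub>R f x) \<partial>lborel)"
    by (intro nn_integral_cong) (simp add: indicator_def)
  also have "\<dots> = ennreal (LINT x:S|lborel. f x)"
    unfolding set_lebesgue_integral_def
    by (rule nn_integral_eq_integral[OF integrable]) (simp_all add: indicator_def nonneg)
  finally show "(\<integral>\<^sup>+x\<in>S. ennreal (f x) \<partial>lborel) = ennreal (LINT x:S|lborel. f x)" .
  show "0 \<le> (LINT x:S|lborel. f x)"
    unfolding set_lebesgue_integral_def by (rule integral_nonneg_AE) (simp add: indicator_def nonneg)
qed

lemma matrix_inv_unique:
  fixes A B :: "'a::semiring_1^'n^'n"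
  assumes "A ** B = mat 1" "B ** A = mat 1"
  shows "matrix_inv A = B"
proof -
  have "A ** matrix_inv A = mat 1 \<and> matrix_inv A ** A = mat 1"
    unfolding matrix_inv_def by (rule someI[of _ B]) (use assms in blast)
  hence "matrix_inv A = matrix_inv A ** (A ** B)" by (simp add: assms)
  also have "\<dots> = B"
    by (simp add: matrix_mul_assoc \<open>A ** matrix_inv A = mat 1 \<and> matrix_inv A ** A = mat 1\<close>)
  finally show ?thesis .
qed

lemma diag3_mult: "diag3 u ** diag3 v = diag3 (\<chi> i. u $ i * v $ i)"
  unfolding diag3_def matrix_matrix_mult_def
  by (simp add: vec_eq_iff sum_3 if_distrib cong: if_cong) (metis exhaust_3)

lemma diag3_one: "diag3 (\<chi> i. 1) = mat 1"
  unfolding diag3_def mat_def by (simp add: vec_eq_iff)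

lemma matrix_inv_diag3:
  assumes "\<And>i. t $ i \<noteq> 0"
  shows "matrix_inv (diag3 t) = diag3 (\<chi> i. 1 / t $ i)"
  by (rule matrix_inv_unique) (simp_all add: diag3_mult assms diag3_one[symmetric])

lemma diag3_mult_self: "diag3 t ** diag3 t = diag3 (vector [\<bar>t $ 1\<bar>\<^sup>2, \<bar>t $ 2\<bar>\<^sup>2, \<bar>t $ 3\<bar>\<^sup>2])"
proof -
  have "(\<chi> i. t $ i * t $ i) = vector [\<bar>t $ 1\<bar>\<^sup>2, \<bar>t $ 2\<bar>\<^sup>2, \<bar>t $ 3\<bar>\<^sup>2]"
    by (simp add: vec_eq_iff forall_3 power2_eq_square)
  thus ?thesis by (simp add: diag3_mult)
qed

lemma matrix_inv_diag3_mult_self: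
  assumes "\<And>i. t $ i \<noteq> 0"
  shows "matrix_inv (diag3 t) ** matrix_inv (diag3 t)
    = diag3 (vector [1 / \<bar>t $ 1\<bar>\<^sup>2, 1 / \<bar>t $ 2\<bar>\<^sup>2, 1 / \<bar>t $ 3\<bar>\<^sup>2])"
proof -
  have "(\<chi> i. 1 / t $ i * (1 / t $ i)) = vector [1 / \<bar>t $ 1\<bar>\<^sup>2, 1 / \<bar>t $ 2\<bar>\<^sup>2, 1 / \<bar>t $ 3\<bar>\<^sup>2]"
    by (simp add: vec_eq_iff forall_3 power2_eq_square)
  thus ?thesis by (simp add: matrix_inv_diag3[OF assms] diag3_mult)
qed

lemma det_diag3: "det (diag3 t) = t $ 1 * t $ 2 * t $ 3"
proof -
  have "det (diag3 t) = (\<Prod>i\<in>UNIV. diag3 t $ i $ i)"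
    by (rule det_diagonal) (simp add: diag3_def)
  also have "\<dots> = (\<Prod>i\<in>{1, 2, 3 :: 3}. t $ i)"
    by (simp add: diag3_def UNIV_3[symmetric])
  also have "\<dots> = t $ 1 * t $ 2 * t $ 3"
    by (simp add: mult.assoc)
  finally show ?thesis .
qed

lemma inner_diag3_sphere_pt:
  "sphere_pt th ph \<bullet> (diag3 u *v sphere_pt th ph)
    = u $ 1 * (sin th * cos ph)\<^sup>2 + u $ 2 * (sin th * sin ph)\<^sup>2 + u $ 3 * (cos th)\<^sup>2"
proof -
  have "(diag3 u *v x) $ i = u $ i * x $ i" for x :: "real^3" and i
    unfolding diag3_def matrix_vector_mult_def using exhaust_3[of i] by (auto simp: sum_3)
  thus ?thesis by (simp add: inner_vec_def sum_3 sphere_pt_def power2_eq_square)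
qed

lemma sphere_integral_inverse_diag_form:
  assumes "0 < a" "0 < b" "0 < c"
  shows "sphere_integral (\<lambda>n. (n \<bullet> (diag3 (vector [1/a\<^sup>2, 1/b\<^sup>2, 1/c\<^sup>2]) *v n)) powr -2)
    = (LINT p:{0..pi} \<times> {0..2*pi}|lborel. sin (fst p) / (diag_norm_sq (1/a) (1/b) (1/c) (fst p) (snd p))\<^sup>2)"
proof -
  have "(sphere_pt th ph \<bullet> (diag3 (vector [1/a\<^sup>2, 1/b\<^sup>2, 1/c\<^sup>2]) *v sphere_pt th ph)) powr -2 * sin th
      = sin th / (diag_norm_sq (1/a) (1/b) (1/c) th ph)\<^sup>2" for th ph
  proof -
    have "sphere_pt th ph \<bullet> (diag3 (vector [1/a\<^sup>2, 1/b\<^sup>2, 1/c\<^sup>2]) *v sphere_pt th ph)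
        = diag_norm_sq (1/a) (1/b) (1/c) th ph"
      by (simp add: inner_diag3_sphere_pt diag_norm_sq_def power_mult_distrib power_divide)
    moreover have "0 \<le> diag_norm_sq (1/a) (1/b) (1/c) th ph"
      using diag_norm_sq_pos[of "1/a" "1/b" "1/c"] assms by (simp add: less_imp_le)
    ultimately show ?thesis by (simp add: powr_minus_divide powr_numeral)
  qed
  thus ?thesis by (simp add: sphere_integral_def)
qed

lemma sphere_integral_sqrt_diag_form:
  "sphere_integral (\<lambda>n. sqrt (n \<bullet> (diag3 (vector [a\<^sup>2, b\<^sup>2, c\<^sup>2]) *v n)))
    = (LINT p:{0..pi} \<times> {0..2*pi}|lborel. sin (fst p) * sqrt (diag_norm_sq a b c (fst p) (snd p)))"
proof -
  have "sphere_pt th ph \<bullet> (diag3 (vector [a\<^sup>2, b\<^sup>2, c\<^sup>2]) *v sphere_pt th ph) = diag_norm_sq a b c th ph"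
    for th ph
    by (simp add: inner_diag3_sphere_pt diag_norm_sq_def power_mult_distrib)
  thus ?thesis by (simp add: sphere_integral_def mult.commute)
qed

lemma sphere_integral_diag_duality:
  fixes a b c :: real
  assumes a: "0 < a" and b: "0 < b" and c: "0 < c"
  shows "sphere_integral (\<lambda>n. (n \<bullet> (diag3 (vector [1/a\<^sup>2, 1/b\<^sup>2, 1/c\<^sup>2]) *v n)) powr -2)
      = a * b * c * sphere_integral (\<lambda>n. sqrt (n \<bullet> (diag3 (vector [a\<^sup>2, b\<^sup>2, c\<^sup>2]) *v n)))"
    and "0 < sphere_integral (\<lambda>n. sqrt (n \<bullet> (diag3 (vector [a\<^sup>2, b\<^sup>2, c\<^sup>2]) *v n)))"
proof -
  let ?R = "{0..pi} \<times> {0..2*pi} :: (real \<times> real) set"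
  define F where "F p = sin (fst p) / (diag_norm_sq (1/a) (1/b) (1/c) (fst p) (snd p))\<^sup>2" for p
  define G where "G p = sin (fst p) * sqrt (diag_norm_sq a b c (fst p) (snd p))" for p
  have R: "compact ?R" by (intro compact_Times compact_Icc)
  have "diag_norm_sq (1/a) (1/b) (1/c) (fst p) (snd p) \<noteq> 0" for p
    using diag_norm_sq_pos[of "1/a" "1/b" "1/c"] a b c by (simp add: less_imp_neq[symmetric])
  hence F_cont: "continuous_on ?R F"
    unfolding F_def diag_norm_sq_def by (intro continuous_intros) auto
  have F_nonneg: "0 \<le> F p" if "p \<in> ?R" for p
    using that unfolding F_def by (auto intro!: divide_nonneg_nonneg sin_ge_zero)
  note F_integral = set_nn_integral_eq_set_integral_continuous[OF R F_cont F_nonneg]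
  have G_cont: "continuous_on ?R G"
    unfolding G_def diag_norm_sq_def by (intro continuous_intros)
  have G_nonneg: "0 \<le> G p" if "p \<in> ?R" for p
    using that unfolding G_def diag_norm_sq_def by (auto intro!: mult_nonneg_nonneg sin_ge_zero)
  note G_integral = set_nn_integral_eq_set_integral_continuous[OF R G_cont G_nonneg]
  have "ennreal (LINT p:?R|lborel. F p) = ennreal (a * b * c) * ennreal (LINT p:?R|lborel. G p)"
    using nn_integral_diag_norm_sq_duality[OF a b c] F_integral(1) G_integral(1)
    unfolding F_def G_def by simp
  also have "\<dots> = ennreal (a * b * c * (LINT p:?R|lborel. G p))"
    by (rule ennreal_mult'[symmetric]) (use a b c in simp)
  finally show "sphere_integral (\<lambda>n. (n \<bullet> (diag3 (vector [1/a\<^sup>2, 1/b\<^sup>2, 1/c\<^sup>2]) *v n)) powr -2)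
      = a * b * c * sphere_integral (\<lambda>n. sqrt (n \<bullet> (diag3 (vector [a\<^sup>2, b\<^sup>2, c\<^sup>2]) *v n)))"
    unfolding sphere_integral_inverse_diag_form[OF a b c] sphere_integral_sqrt_diag_form
      F_def[symmetric] G_def[symmetric]
    using F_integral(2) G_integral(2) a b c by simp
  have "ennreal (LINT p:?R|lborel. G p) \<noteq> 0"
    using nn_integral_sin_sqrt_diag_norm_sq_pos[OF a b c] G_integral(1) unfolding G_def by simp
  thus "0 < sphere_integral (\<lambda>n. sqrt (n \<bullet> (diag3 (vector [a\<^sup>2, b\<^sup>2, c\<^sup>2]) *v n)))"
    unfolding sphere_integral_sqrt_diag_form G_def[symmetric] using G_integral(2) by simp
qed

theorem mainTheorem2:
  fixes t :: "real^3" and T :: "real^3^3" and N :: real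
  assumes T_def: "T = diag3 t"
    and nz: "t $ 1 * t $ 2 * t $ 3 \<noteq> 0"
    and N_def: "inverse N =
      sphere_integral (\<lambda>n. (n \<bullet> ((matrix_inv T ** matrix_inv T) *v n)) powr (-2))"
  shows "N * \<bar>det T\<bar> * sphere_integral (\<lambda>n. sqrt (n \<bullet> ((T ** T) *v n))) = 1
     \<and> (2 * pi * N * \<bar>det T\<bar> = 1 \<longleftrightarrow>
          sphere_integral (\<lambda>n. sqrt (n \<bullet> ((T ** T) *v n))) = 2 * pi)"
proof -
  have t_nz: "t $ i \<noteq> 0" for i
    using nz exhaust_3[of i] by auto
  define a b c where "a = \<bar>t $ 1\<bar>" and "b = \<bar>t $ 2\<bar>" and "c = \<bar>t $ 3\<bar>"
  have a: "0 < a" and b: "0 < b" and c: "0 < c"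
    using t_nz unfolding a_def b_def c_def by auto
  have det: "\<bar>det T\<bar> = a * b * c"
    unfolding T_def det_diag3 a_def b_def c_def by (simp add: abs_mult)
  define S where "S = sphere_integral (\<lambda>n. sqrt (n \<bullet> ((T ** T) *v n)))"
  have "inverse N = a * b * c * S" and S: "0 < S"
    using sphere_integral_diag_duality[OF a b c]
    unfolding N_def S_def T_def diag3_mult_self matrix_inv_diag3_mult_self[OF t_nz] a_def b_def c_def
    by auto
  hence "N = inverse (a * b * c * S)"
    by (metis inverse_inverse_eq)
  hence "N * \<bar>det T\<bar> * S = 1"
    unfolding det using a b c S by (simp add: field_simps)
  moreover from this have "2 * pi * N * \<bar>det T\<bar> = 2 * pi / S"
    using S by (simp add: field_simps)
  hence "2 * pi * N * \<bar>det T\<bar> = 1 \<longleftrightarrow> S = 2 * pi"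
    using S by (simp only:) (auto simp: divide_eq_1_iff)
  ultimately show ?thesis
    unfolding S_def[symmetric] by blast
qed

end
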